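(* Let $\mathcal{C}$ be a linear code over $R$ of type $(n;k,0,\dots,0)$, let $G$ be a generator matrix of $\mathcal{C}$ with rows $u_1,\dots,u_k$, and let $c\in\mathcal{C}$. If $c=\sum_{i=1}^k\alpha_iu_i$ with $\alpha_i\in R$, then $\nu(c)=\min\{\nu(\alpha_1),\dots,\nu(\alpha_k)\}$.
   Context: Let $R$ be a finite commutative chain ring with maximal ideal $\langle\gamma\rangle$ and nilpotency index $s$ (least $s$ with $\gamma^s=0$). A linear code of length $n$ is an $R$-submodule of $R^n$; it has type $(n;k,0,\dots,0)$ when it is a free $R$-module of rank $k$ (more generally type $(n;t_1,\dots,t_s)$ means isomorphic to $\bigoplus_{i=1}^s(R/\langle\gamma^{s-i+1}\rangle)^{t_i}$). Valuation: for $x\in R\setminus\{0\}$, $\nu(x)$ is the largest $m\in\{0,\dots,s-1\}$ with $x=\gamma^m\beta$ for a unit $\beta$; $\nu(0)=\infty$ (larger than every integer). For $x=(x_1,\dots,x_n)\in R^n$, $\nu(x)=\min_i\nu(x_i)$. *)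

theory Defs
  imports Main "HOL-Library.Extended_Nat" "HOL-Library.Function_Algebras"
begin

definition is_ideal :: "'a::comm_ring_1 set \<Rightarrow> bool" where
  "is_ideal I \<longleftrightarrow> 0 \<in> I \<and> (\<forall>x\<in>I. \<forall>y\<in>I. x + y \<in> I) \<and> (\<forall>r. \<forall>x\<in>I. r * x \<in> I)"

definition principal_ideal :: "'a::comm_ring_1 \<Rightarrow> 'a set" where
  "principal_ideal g = {r * g | r. True}"

definition maximal_ideal :: "'a::comm_ring_1 set \<Rightarrow> bool" where
  "maximal_ideal I \<longleftrightarrow> is_ideal I \<and> 1 \<notin> I \<and>
     (\<forall>J. is_ideal J \<and> I \<subseteq> J \<and> 1 \<notin> J \<longrightarrow> J = I)"

definition finite_chain_ring :: "'a::comm_ring_1 itself \<Rightarrow> bool" where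
  "finite_chain_ring _ \<longleftrightarrow> finite (UNIV :: 'a set) \<and> (0::'a) \<noteq> 1 \<and>
     (\<forall>I J :: 'a set. is_ideal I \<and> is_ideal J \<longrightarrow> I \<subseteq> J \<or> J \<subseteq> I)"

definition nil_index :: "'a::comm_ring_1 \<Rightarrow> nat" where
  "nil_index g = (LEAST s. g ^ s = 0)"

definition nu :: "'a::comm_ring_1 \<Rightarrow> 'a \<Rightarrow> enat" where
  "nu g x = (if x = 0 then \<infinity>
     else enat (GREATEST m. m < nil_index g \<and> (\<exists>\<beta>. \<beta> dvd 1 \<and> x = g ^ m * \<beta>)))"

definition vecs :: "nat \<Rightarrow> (nat \<Rightarrow> 'a::zero) set" where
  "vecs n = {v. \<forall>i\<ge>n. v i = 0}"

definition smult_vec :: "'a::times \<Rightarrow> (nat \<Rightarrow> 'a) \<Rightarrow> (nat \<Rightarrow> 'a)" where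
  "smult_vec a v = (\<lambda>i. a * v i)"

definition nu_vec :: "'a::comm_ring_1 \<Rightarrow> nat \<Rightarrow> (nat \<Rightarrow> 'a) \<Rightarrow> enat" where
  "nu_vec g n v = (INF i\<in>{..<n}. nu g (v i))"

definition linear_code :: "nat \<Rightarrow> (nat \<Rightarrow> 'a::comm_ring_1) set \<Rightarrow> bool" where
  "linear_code n C \<longleftrightarrow> C \<subseteq> vecs n \<and> 0 \<in> C \<and>
     (\<forall>x\<in>C. \<forall>y\<in>C. x + y \<in> C) \<and> (\<forall>a. \<forall>x\<in>C. smult_vec a x \<in> C)"

definition R_linear :: "((nat \<Rightarrow> 'a::comm_ring_1) \<Rightarrow> (nat \<Rightarrow> 'a)) \<Rightarrow> (nat \<Rightarrow> 'a) set \<Rightarrow> bool" where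
  "R_linear f V \<longleftrightarrow> (\<forall>x\<in>V. \<forall>y\<in>V. f (x + y) = f x + f y) \<and>
     (\<forall>a. \<forall>x\<in>V. f (smult_vec a x) = smult_vec a (f x))"

text \<open>Type (n;k,0,...,0): C is a free R-module of rank k, i.e. isomorphic to R^k.\<close>
definition code_type_free :: "nat \<Rightarrow> nat \<Rightarrow> (nat \<Rightarrow> 'a::comm_ring_1) set \<Rightarrow> bool" where
  "code_type_free n k C \<longleftrightarrow> linear_code n C \<and>
     (\<exists>f. R_linear f (vecs k) \<and> bij_betw f (vecs k) C)"

definition generator_matrix :: "nat \<Rightarrow> nat \<Rightarrow> (nat \<Rightarrow> nat \<Rightarrow> 'a::comm_ring_1) \<Rightarrow> (nat \<Rightarrow> 'a) set \<Rightarrow> bool" where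
  "generator_matrix n k u C \<longleftrightarrow> (\<forall>i<k. u i \<in> vecs n) \<and>
     C = {(\<Sum>i<k. smult_vec (\<alpha> i) (u i)) | \<alpha>. True}"

end

theory Submission
  imports Defs
begin

text \<open>Every nonzero x is \<open>\<gamma>\<^sup>t \<epsilon>\<close> with \<open>\<epsilon>\<close> a unit and \<open>t < s\<close>, so \<open>\<nu>(x) \<ge> m\<close> just means \<open>\<gamma>\<^sup>m\<close> divides x.
  Hence \<open>\<nu>(c) \<ge> m\<close> follows from \<open>\<nu>(\<alpha>\<^sub>i) \<ge> m\<close> for all i by linearity. Conversely, if \<open>\<gamma>\<^sup>m\<close>
  divides c but \<open>\<alpha>\<^sub>j = \<gamma>\<^sup>t \<epsilon>\<close> with \<open>t < m\<close>, then multiplying by \<open>\<gamma>\<^sup>s\<^sup>-\<^sup>1\<^sup>-\<^sup>t\<close> kills c but not \<open>\<alpha>\<^sub>j\<close>,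
  contradicting the linear independence of the rows of a generator matrix of a free code; that
  independence holds because the surjection \<open>R\<^sup>k \<rightarrow> \<C>\<close> given by the rows is between finite sets
  of equal size.\<close>

lemma sum_apply: "sum f A x = (\<Sum>i\<in>A. f i x)"
  by (induction A rule: infinite_finite_induct) auto

lemma enat_eqI:
  fixes a b :: enat
  assumes "\<And>m. enat m \<le> a \<longleftrightarrow> enat m \<le> b"
  shows "a = b"
  using assms[of 0] assms[of "Suc (the_enat a)"] assms[of "the_enat a"] assms[of "Suc (the_enat b)"]
  by (cases a; cases b) auto

lemma mem_principal_ideal_iff: "y \<in> principal_ideal x \<longleftrightarrow> x dvd y"
  unfolding principal_ideal_def dvd_def by (auto simp: mult.commute)

lemma is_ideal_principal_ideal: "is_ideal (principal_ideal x)"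
  unfolding is_ideal_def by (auto simp: mem_principal_ideal_iff)

lemma finite_vecs:
  assumes "finite (UNIV :: 'a set)"
  shows "finite (vecs k :: (nat \<Rightarrow> 'a::zero) set)"
proof -
  define of_list where "of_list = (\<lambda>xs i. if i < k then xs ! i else (0::'a))"
  have "vecs k \<subseteq> of_list ` {xs. set xs \<subseteq> UNIV \<and> length xs = k}"
  proof
    fix v :: "nat \<Rightarrow> 'a" assume "v \<in> vecs k"
    then have "v = of_list (map v [0..<k])"
      by (auto simp: of_list_def vecs_def fun_eq_iff)
    then show "v \<in> of_list ` {xs. set xs \<subseteq> UNIV \<and> length xs = k}" by force
  qed
  then show ?thesis
    using finite_lists_length_eq[OF assms] by (rule finite_subset[OF _ finite_imageI])
qed

lemma lin_comb_apply: "(\<Sum>i<k. smult_vec (\<beta> i) (u i)) j = (\<Sum>i<k. \<beta> i * u i j)"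
  by (simp add: sum_apply smult_vec_def)

lemma lin_comb_coeffs_in_vecs:
  obtains \<beta>' where "\<beta>' \<in> vecs k" and "\<forall>i<k. \<beta>' i = \<beta> i"
    and "(\<Sum>i<k. smult_vec (\<beta>' i) (u i)) = (\<Sum>i<k. smult_vec (\<beta> i) (u i))"
proof
  show "(\<lambda>i. if i < k then \<beta> i else 0) \<in> vecs k"
    by (simp add: vecs_def)
qed auto

lemma generator_matrix_image:
  assumes "generator_matrix n k u C"
  shows "(\<lambda>\<beta>. \<Sum>i<k. smult_vec (\<beta> i) (u i)) ` vecs k = C"
proof -
  have C: "C = {(\<Sum>i<k. smult_vec (\<beta> i) (u i)) | \<beta>. True}"
    using assms by (simp add: generator_matrix_def)
  show ?thesis
  proof
    show "(\<lambda>\<beta>. \<Sum>i<k. smult_vec (\<beta> i) (u i)) ` vecs k \<subseteq> C"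
      using C by blast
  next
    show "C \<subseteq> (\<lambda>\<beta>. \<Sum>i<k. smult_vec (\<beta> i) (u i)) ` vecs k"
    proof
      fix c assume "c \<in> C"
      then obtain \<beta> where c: "c = (\<Sum>i<k. smult_vec (\<beta> i) (u i))"
        using C by blast
      obtain \<beta>' where "\<beta>' \<in> vecs k"
        and "(\<Sum>i<k. smult_vec (\<beta>' i) (u i)) = (\<Sum>i<k. smult_vec (\<beta> i) (u i))"
        by (rule lin_comb_coeffs_in_vecs)
      then show "c \<in> (\<lambda>\<beta>. \<Sum>i<k. smult_vec (\<beta> i) (u i)) ` vecs k"
        using c by (auto intro: rev_image_eqI)
    qed
  qed
qed

lemma free_code_lin_comb_inj_on:
  assumes "finite (UNIV :: 'a set)"
    and "code_type_free n k C" and "generator_matrix n k u (C :: (nat \<Rightarrow> 'a::comm_ring_1) set)"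
  shows "inj_on (\<lambda>\<beta>. \<Sum>i<k. smult_vec (\<beta> i) (u i)) (vecs k)"
proof (rule eq_card_imp_inj_on)
  show "finite (vecs k :: (nat \<Rightarrow> 'a) set)"
    using assms(1) by (rule finite_vecs)
  obtain f where "bij_betw f (vecs k :: (nat \<Rightarrow> 'a) set) C"
    using assms(2) unfolding code_type_free_def by blast
  then show "card ((\<lambda>\<beta>. \<Sum>i<k. smult_vec (\<beta> i) (u i)) ` vecs k) = card (vecs k :: (nat \<Rightarrow> 'a) set)"
    using generator_matrix_image[OF assms(3)] by (simp add: bij_betw_same_card)
qed

lemma free_code_rows_independent:
  assumes "finite (UNIV :: 'a set)"
    and "code_type_free n k C" and "generator_matrix n k u (C :: (nat \<Rightarrow> 'a::comm_ring_1) set)"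
    and "(\<Sum>i<k. smult_vec (\<beta> i) (u i)) = 0" and "j < k"
  shows "\<beta> j = 0"
proof -
  obtain \<beta>' where "\<beta>' \<in> vecs k" and "\<forall>i<k. \<beta>' i = \<beta> i"
    and "(\<Sum>i<k. smult_vec (\<beta>' i) (u i)) = (\<Sum>i<k. smult_vec (\<beta> i) (u i))"
    by (rule lin_comb_coeffs_in_vecs)
  moreover have "(\<Sum>i<k. smult_vec (0 :: 'a) (u i)) = 0"
    by (simp add: fun_eq_iff lin_comb_apply)
  ultimately have "(\<Sum>i<k. smult_vec (\<beta>' i) (u i)) = (\<Sum>i<k. smult_vec ((\<lambda>_. 0) i) (u i))"
    using assms(4) by simp
  moreover have "(\<lambda>_. 0) \<in> vecs k"
    by (simp add: vecs_def)
  ultimately have "\<beta>' = (\<lambda>_. 0)"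
    using free_code_lin_comb_inj_on[OF assms(1-3)] \<open>\<beta>' \<in> vecs k\<close>
    by (auto dest: inj_onD[of _ _ \<beta>' "\<lambda>_. 0"])
  then show ?thesis
    using \<open>\<forall>i<k. \<beta>' i = \<beta> i\<close> assms(5) by auto
qed

lemma dvd_mult_unit_right_iff:
  fixes x y \<beta> :: "'a::comm_semiring_1"
  assumes "\<beta> dvd 1"
  shows "x dvd y * \<beta> \<longleftrightarrow> x dvd y"
proof
  obtain v where "1 = \<beta> * v"
    using assms ..
  then have "y = y * \<beta> * v"
    by (simp add: mult.assoc)
  moreover assume "x dvd y * \<beta>"
  ultimately show "x dvd y"
    by (metis dvd_mult2)
qed simp

locale chain_ring =
  fixes \<gamma> :: "'a::comm_ring_1"
  assumes finite_chain_ring: "finite_chain_ring TYPE('a)"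
    and maximal_gamma: "maximal_ideal (principal_ideal \<gamma>)"
begin

lemma finite_ring: "finite (UNIV :: 'a set)"
  using finite_chain_ring by (simp add: finite_chain_ring_def)

lemma gamma_not_unit: "\<not> \<gamma> dvd 1"
  using maximal_gamma mem_principal_ideal_iff[of 1 \<gamma>] unfolding maximal_ideal_def by blast

text \<open>The ideals \<open>(x)\<close> and \<open>(\<gamma>)\<close> are comparable, and maximality rules out \<open>(\<gamma>) \<subset> (x)\<close>.\<close>
lemma gamma_dvd_nonunit:
  assumes "\<not> x dvd 1"
  shows "\<gamma> dvd x"
proof -
  have "principal_ideal x \<subseteq> principal_ideal \<gamma> \<or> principal_ideal \<gamma> \<subseteq> principal_ideal x"
    using finite_chain_ring maximal_gamma is_ideal_principal_ideal[of x]
    unfolding finite_chain_ring_def maximal_ideal_def by blast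
  moreover have "1 \<notin> principal_ideal x"
    using assms by (simp add: mem_principal_ideal_iff)
  ultimately have "principal_ideal x \<subseteq> principal_ideal \<gamma>"
    using maximal_gamma is_ideal_principal_ideal[of x] unfolding maximal_ideal_def by blast
  then show ?thesis
    by (meson dvd_refl mem_principal_ideal_iff subsetD)
qed

lemma one_minus_gamma_power_unit:
  assumes "0 < d"
  shows "(1 - \<gamma> ^ d) dvd 1"
proof (rule ccontr)
  assume "\<not> (1 - \<gamma> ^ d) dvd 1"
  then have "\<gamma> dvd (1 - \<gamma> ^ d) + \<gamma> ^ d"
    using assms gamma_dvd_nonunit by (intro dvd_add) (auto simp: dvd_power)
  then show False
    using gamma_not_unit by simp
qed

text \<open>By finiteness \<open>\<gamma>\<^sup>a = \<gamma>\<^sup>a\<^sup>+\<^sup>d\<close> for some \<open>d > 0\<close>, i.e. \<open>\<gamma>\<^sup>a (1 - \<gamma>\<^sup>d) = 0\<close> with a unit factor.\<close>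
lemma gamma_nilpotent: "\<exists>s. \<gamma> ^ s = 0"
proof -
  have "\<not> inj (\<lambda>m::nat. \<gamma> ^ m)"
    using finite_chain_ring finite_imageD[of "\<lambda>m::nat. \<gamma> ^ m" UNIV] finite_subset[of _ UNIV]
    unfolding finite_chain_ring_def by auto
  then obtain a b :: nat where "a < b" and ab: "\<gamma> ^ a = \<gamma> ^ b"
    unfolding inj_def by (metis linorder_neqE_nat)
  define d where "d = b - a"
  have "\<gamma> ^ a * (1 - \<gamma> ^ d) = \<gamma> ^ a - \<gamma> ^ b"
    using \<open>a < b\<close> by (simp add: d_def right_diff_distrib flip: power_add)
  then have "\<gamma> ^ a * (1 - \<gamma> ^ d) = 0"
    using ab by simp
  moreover obtain v where "1 = (1 - \<gamma> ^ d) * v"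
    using one_minus_gamma_power_unit[of d] \<open>a < b\<close> by (auto simp: d_def elim: dvdE)
  ultimately have "\<gamma> ^ a = 0"
    by (metis mult.assoc mult_1_right mult_zero_left)
  then show ?thesis ..
qed

lemma gamma_power_eq_0_iff: "\<gamma> ^ m = 0 \<longleftrightarrow> nil_index \<gamma> \<le> m"
proof
  assume "\<gamma> ^ m = 0"
  then show "nil_index \<gamma> \<le> m"
    unfolding nil_index_def by (rule Least_le)
next
  have "\<gamma> ^ nil_index \<gamma> = 0"
    unfolding nil_index_def using gamma_nilpotent by (rule LeastI_ex)
  moreover assume "nil_index \<gamma> \<le> m"
  ultimately show "\<gamma> ^ m = 0"
    by (metis le_add_diff_inverse mult_zero_left power_add)
qed

lemma nil_index_pos: "0 < nil_index \<gamma>"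
  using finite_chain_ring gamma_power_eq_0_iff[of 0] by (auto simp: finite_chain_ring_def)

lemma gamma_power_dvd_gamma_power_iff:
  assumes "m < nil_index \<gamma>"
  shows "\<gamma> ^ j dvd \<gamma> ^ m \<longleftrightarrow> j \<le> m"
proof
  assume "\<gamma> ^ j dvd \<gamma> ^ m"
  show "j \<le> m"
  proof (rule ccontr)
    assume "\<not> j \<le> m"
    then have "\<gamma> ^ Suc m dvd \<gamma> ^ j"
      by (intro le_imp_power_dvd) simp
    then have "\<gamma> ^ Suc m dvd \<gamma> ^ m"
      using \<open>\<gamma> ^ j dvd \<gamma> ^ m\<close> by (rule dvd_trans)
    then obtain r where r: "\<gamma> ^ m = \<gamma> ^ Suc m * r" ..
    have "nil_index \<gamma> - 1 = (nil_index \<gamma> - Suc m) + m"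
      using assms by simp
    then have "\<gamma> ^ (nil_index \<gamma> - 1) = \<gamma> ^ (nil_index \<gamma> - Suc m) * \<gamma> ^ m"
      by (metis power_add)
    also have "\<dots> = \<gamma> ^ (nil_index \<gamma> - Suc m) * \<gamma> ^ Suc m * r"
      by (subst r) (rule mult.assoc[symmetric])
    also have "\<dots> = \<gamma> ^ nil_index \<gamma> * r"
      using assms by (metis Suc_leI le_add_diff_inverse2 power_add)
    also have "\<dots> = 0"
      using gamma_power_eq_0_iff[of "nil_index \<gamma>"] by simp
    finally have "\<gamma> ^ (nil_index \<gamma> - 1) = 0" .
    then show False
      using nil_index_pos by (simp add: gamma_power_eq_0_iff)
  qed
qed (simp add: le_imp_power_dvd)

lemma eq_gamma_power_mult_unit:
  assumes "x \<noteq> 0"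
  obtains m \<beta> where "m < nil_index \<gamma>" and "\<beta> dvd 1" and "x = \<gamma> ^ m * \<beta>"
proof -
  define m where "m = (GREATEST m. \<gamma> ^ m dvd x)"
  have bounded: "j < nil_index \<gamma>" if "\<gamma> ^ j dvd x" for j
  proof (rule ccontr)
    assume "\<not> j < nil_index \<gamma>"
    then have "\<gamma> ^ j = 0"
      by (simp add: gamma_power_eq_0_iff)
    with that assms show False
      by simp
  qed
  then have le_bound: "j \<le> nil_index \<gamma>" if "\<gamma> ^ j dvd x" for j
    using that by (simp add: less_imp_le)
  have "\<gamma> ^ 0 dvd x"
    by simp
  then have "\<gamma> ^ m dvd x"
    unfolding m_def using le_bound by (rule GreatestI_nat)
  then obtain y where y: "x = \<gamma> ^ m * y" ..
  have greatest: "j \<le> m" if "\<gamma> ^ j dvd x" for j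
    unfolding m_def using that le_bound by (rule Greatest_le_nat)
  have "y dvd 1"
  proof (rule ccontr)
    assume "\<not> y dvd 1"
    then have "\<gamma> * \<gamma> ^ m dvd y * \<gamma> ^ m"
      by (intro mult_dvd_mono dvd_refl gamma_dvd_nonunit)
    then have "\<gamma> ^ Suc m dvd x"
      by (metis y mult.commute power_Suc)
    then show False
      using greatest[of "Suc m"] by simp
  qed
  with bounded[OF \<open>\<gamma> ^ m dvd x\<close>] show ?thesis
    using y by (rule that)
qed

lemma nu_gamma_power_mult_unit:
  assumes "m < nil_index \<gamma>" and "\<beta> dvd 1"
  shows "nu \<gamma> (\<gamma> ^ m * \<beta>) = enat m"
proof -
  have dvd_iff: "\<gamma> ^ j dvd \<gamma> ^ m * \<beta> \<longleftrightarrow> j \<le> m" for j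
    using assms by (simp add: dvd_mult_unit_right_iff gamma_power_dvd_gamma_power_iff)
  then have "\<gamma> ^ m * \<beta> \<noteq> 0"
    using dvd_iff[of "Suc m"] by auto
  moreover have "(GREATEST j. j < nil_index \<gamma> \<and> (\<exists>\<beta>'. \<beta>' dvd 1 \<and> \<gamma> ^ m * \<beta> = \<gamma> ^ j * \<beta>')) = m"
  proof (rule Greatest_equality)
    show "m < nil_index \<gamma> \<and> (\<exists>\<beta>'. \<beta>' dvd 1 \<and> \<gamma> ^ m * \<beta> = \<gamma> ^ m * \<beta>')"
      using assms by blast
  next
    fix j assume "j < nil_index \<gamma> \<and> (\<exists>\<beta>'. \<beta>' dvd 1 \<and> \<gamma> ^ m * \<beta> = \<gamma> ^ j * \<beta>')"
    then have "\<gamma> ^ j dvd \<gamma> ^ m * \<beta>"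
      by (metis dvd_triv_left)
    then show "j \<le> m"
      using dvd_iff by blast
  qed
  ultimately show ?thesis
    by (simp add: nu_def)
qed

lemma le_nu_iff_gamma_power_dvd: "enat j \<le> nu \<gamma> x \<longleftrightarrow> \<gamma> ^ j dvd x"
proof (cases "x = 0")
  case False
  then obtain m \<beta> where "m < nil_index \<gamma>" and "\<beta> dvd 1" and "x = \<gamma> ^ m * \<beta>"
    by (rule eq_gamma_power_mult_unit)
  then show ?thesis
    by (simp add: nu_gamma_power_mult_unit dvd_mult_unit_right_iff gamma_power_dvd_gamma_power_iff)
qed (simp add: nu_def)

lemma le_INF_nu_iff: "enat j \<le> (INF i\<in>{..<n}. nu \<gamma> (f i)) \<longleftrightarrow> (\<forall>i<n. \<gamma> ^ j dvd f i)"
  by (auto simp: le_INF_iff le_nu_iff_gamma_power_dvd)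

lemma gamma_power_annihilates_nonmultiple:
  assumes "\<not> \<gamma> ^ m dvd x"
  obtains e where "\<gamma> ^ e * x \<noteq> 0" and "\<gamma> ^ (e + m) = 0"
proof -
  have "x \<noteq> 0"
    using assms by auto
  then obtain t \<beta> where t: "t < nil_index \<gamma>" and "\<beta> dvd 1" and x: "x = \<gamma> ^ t * \<beta>"
    by (rule eq_gamma_power_mult_unit)
  have "t < m"
    using assms x by (metis dvd_mult2 le_imp_power_dvd not_less)
  define e where "e = nil_index \<gamma> - 1 - t"
  have "e + t = nil_index \<gamma> - 1"
    using t by (simp add: e_def)
  then have "\<gamma> ^ e * x = \<gamma> ^ (nil_index \<gamma> - 1) * \<beta>"
    by (metis x mult.assoc power_add)
  then have "\<gamma> ^ e * x \<noteq> 0"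
    using nu_gamma_power_mult_unit[of "nil_index \<gamma> - 1" \<beta>] nil_index_pos \<open>\<beta> dvd 1\<close>
    by (auto simp: nu_def)
  moreover have "\<gamma> ^ (e + m) = 0"
    using \<open>t < m\<close> t by (simp add: e_def gamma_power_eq_0_iff)
  ultimately show ?thesis
    using that by blast
qed

lemma gamma_power_dvd_lin_comb_iff:
  assumes "code_type_free n k C" and "generator_matrix n k u C"
  shows "(\<forall>i<n. \<gamma> ^ m dvd (\<Sum>j<k. smult_vec (\<alpha> j) (u j)) i) \<longleftrightarrow> (\<forall>j<k. \<gamma> ^ m dvd \<alpha> j)"
    (is "(\<forall>i<n. \<gamma> ^ m dvd ?c i) \<longleftrightarrow> _")
proof
  assume "\<forall>j<k. \<gamma> ^ m dvd \<alpha> j"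
  then show "\<forall>i<n. \<gamma> ^ m dvd ?c i"
    by (auto simp: lin_comb_apply intro!: dvd_sum)
next
  assume c_dvd: "\<forall>i<n. \<gamma> ^ m dvd ?c i"
  show "\<forall>j<k. \<gamma> ^ m dvd \<alpha> j"
  proof (intro allI impI, rule ccontr)
    fix j assume "j < k" and "\<not> \<gamma> ^ m dvd \<alpha> j"
    from this(2) obtain e where "\<gamma> ^ e * \<alpha> j \<noteq> 0" and "\<gamma> ^ (e + m) = 0"
      by (rule gamma_power_annihilates_nonmultiple)
    have "(\<Sum>j<k. smult_vec (\<gamma> ^ e * \<alpha> j) (u j)) i = 0" for i
    proof (cases "i < n")
      case True
      then obtain r where r: "?c i = \<gamma> ^ m * r"
        using c_dvd by blast
      have "(\<Sum>j<k. smult_vec (\<gamma> ^ e * \<alpha> j) (u j)) i = \<gamma> ^ e * ?c i"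
        by (simp add: lin_comb_apply sum_distrib_left mult.assoc)
      also have "\<dots> = \<gamma> ^ (e + m) * r"
        by (simp add: r power_add mult.assoc)
      finally show ?thesis
        using \<open>\<gamma> ^ (e + m) = 0\<close> by simp
    next
      case False
      have "u j i = 0" if "j < k" for j
        using assms(2) that False by (simp add: generator_matrix_def vecs_def)
      then show ?thesis
        by (simp add: lin_comb_apply)
    qed
    then have "(\<Sum>j<k. smult_vec (\<gamma> ^ e * \<alpha> j) (u j)) = 0"
      by (simp add: fun_eq_iff)
    then have "\<gamma> ^ e * \<alpha> j = 0"
      using \<open>j < k\<close> by (rule free_code_rows_independent[OF finite_ring assms])
    with \<open>\<gamma> ^ e * \<alpha> j \<noteq> 0\<close> show False ..
  qed
qed

end

theorem lemma3p8:
  fixes \<gamma> :: "'a::comm_ring_1"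
    and C :: "(nat \<Rightarrow> 'a) set"
    and u :: "nat \<Rightarrow> nat \<Rightarrow> 'a"
    and c :: "nat \<Rightarrow> 'a"
    and \<alpha> :: "nat \<Rightarrow> 'a"
  assumes "finite_chain_ring TYPE('a)"
    and "maximal_ideal (principal_ideal \<gamma>)"
    and "code_type_free n k C"
    and "generator_matrix n k u C"
    and "c \<in> C"
    and "c = (\<Sum>i<k. smult_vec (\<alpha> i) (u i))"
  shows "nu_vec \<gamma> n c = (INF i\<in>{..<k}. nu \<gamma> (\<alpha> i))"
  \<comment> \<open>The hypothesis \<open>c \<in> C\<close> is implied by the last one and not needed.\<close>
proof -
  interpret chain_ring \<gamma>
    using assms(1,2) by unfold_locales
  show ?thesis
  proof (rule enat_eqI)
    fix m
    show "enat m \<le> nu_vec \<gamma> n c \<longleftrightarrow> enat m \<le> (INF i\<in>{..<k}. nu \<gamma> (\<alpha> i))"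
      unfolding nu_vec_def le_INF_nu_iff assms(6)
      using assms(3,4) by (rule gamma_power_dvd_lin_comb_iff)
  qed
qed

end
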